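(* Let $k\geq 2$, $a\in\{0,1,2\}$, and let $S$ and $\widetilde{S}$ be binary phylogenetic $X$-trees with $|X| = 2k+a$. Let $X^* = X\cup\{x,y\}$ where $x\neq y$ and $x,y\notin X$. Assume $\widetilde{S}$ can be obtained from $S$ by a series of $k$-problematic moves. Let $e_1\in E(S)$ and let $T$ be the binary phylogenetic $X^*$-tree obtained from $S$ by attaching cherry $[x,y]$ to $e_1$. Then there exists an edge $e_2\in E(\widetilde{S})$ such that the binary phylogenetic $X^*$-tree $\widetilde{T}$ obtained from $\widetilde{S}$ by attaching cherry $[x,y]$ to $e_2$ can be obtained from $T$ by a series of $(k+1)$-problematic moves.
   Context: A phylogenetic $X$-tree is a tree with no vertices of degree 2 whose leaves are bijectively labelled by (and identified with) $X$; binary means maximum degree 3; $\cong$ denotes isomorphism fixing all leaf labels. Attaching cherry $[x,y]$ to an edge $e=\{p,q\}$: subdivide $e$ by a new vertex $u$, add a new vertex $c$ with edge $\{u,c\}$, and add new leaves $x,y$ with edges $\{c,x\},\{c,y\}$. NNI move: for an inner edge $e=\{v,w\}$ (both endpoints non-leaves) of a binary tree $T$, with $v$ adjacent to $v_1,v_2$ and $w$ adjacent to $w_1,w_2$ besides each other, replace $\{v,v_1\},\{w,w_1\}$ by $\{v,w_1\},\{w,v_1\}$ (or analogously with $w_2$). Deleting $v,w$ and incident edges leaves four subtrees with leaf counts $n_1,\dots,n_4$; the NNI move defined by $e$ is $k$-problematic if $\sum_{i=1}^4\lfloor (n_i-1)/2\rfloor<k-2$. $\widetilde{S}$ can be obtained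 from $S$ by a series of $k$-problematic moves if $S\cong\widetilde{S}$ or $\widetilde{S}$ is isomorphic to a tree obtained from $S$ by a finite sequence of NNI moves each of which is $k$-problematic. *)

theory Defs
  imports Main
begin

text \<open>Finite simple graphs: a vertex set V and a set E of 2-element subsets of V.\<close>

definition edge_rel :: "'a set set \<Rightarrow> ('a \<times> 'a) set" where
  "edge_rel E = {(a, b). {a, b} \<in> E}"

definition connected_graph :: "'a set \<Rightarrow> 'a set set \<Rightarrow> bool" where
  "connected_graph V E \<longleftrightarrow> (\<forall>a\<in>V. \<forall>b\<in>V. (a, b) \<in> (edge_rel E)\<^sup>*)"

text \<open>A tree: finite connected simple graph without cycles; acyclicity is expressed
  as: the two endpoints of any edge are not connected once that edge is removed.\<close>
definition is_tree :: "'a set \<Rightarrow> 'a set set \<Rightarrow> bool" where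
  "is_tree V E \<longleftrightarrow> finite V \<and> V \<noteq> {} \<and>
     (\<forall>e\<in>E. \<exists>a b. e = {a, b} \<and> a \<noteq> b \<and> a \<in> V \<and> b \<in> V) \<and>
     connected_graph V E \<and>
     (\<forall>a b. {a, b} \<in> E \<longrightarrow> (a, b) \<notin> (edge_rel (E - {{a, b}}))\<^sup>*)"

definition degree :: "'a set set \<Rightarrow> 'a \<Rightarrow> nat" where
  "degree E v = card {e \<in> E. v \<in> e}"

definition phylo_tree :: "'a set \<Rightarrow> 'a set \<Rightarrow> 'a set set \<Rightarrow> bool" where
  "phylo_tree X V E \<longleftrightarrow> is_tree V E \<and> X \<subseteq> V \<and>
     {v \<in> V. degree E v \<le> 1} = X \<and> (\<forall>v\<in>V. degree E v \<noteq> 2)"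

definition binary_phylo_tree :: "'a set \<Rightarrow> 'a set \<Rightarrow> 'a set set \<Rightarrow> bool" where
  "binary_phylo_tree X V E \<longleftrightarrow> phylo_tree X V E \<and> (\<forall>v\<in>V. degree E v \<le> 3)"

definition iso_X :: "'a set \<Rightarrow> 'a set \<Rightarrow> 'a set set \<Rightarrow> 'a set \<Rightarrow> 'a set set \<Rightarrow> bool" where
  "iso_X X V E V' E' \<longleftrightarrow> (\<exists>f. bij_betw f V V' \<and>
     (\<forall>a\<in>V. \<forall>b\<in>V. {a, b} \<in> E \<longleftrightarrow> {f a, f b} \<in> E') \<and> (\<forall>z\<in>X. f z = z))"

text \<open>Attaching cherry [x,y] to edge e = {p,q}, using fresh vertices u (subdivision) and c.\<close>
definition attach_cherry ::
  "'a set \<Rightarrow> 'a set set \<Rightarrow> 'a set \<Rightarrow> 'a \<Rightarrow> 'a \<Rightarrow> 'a \<Rightarrow> 'a \<Rightarrow> 'a set \<Rightarrow> 'a set set \<Rightarrow> bool" where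
  "attach_cherry V E e x y u c V' E' \<longleftrightarrow> e \<in> E \<and>
     u \<notin> V \<and> c \<notin> V \<and> x \<notin> V \<and> y \<notin> V \<and> distinct [u, c, x, y] \<and>
     (\<exists>p q. e = {p, q} \<and> V' = V \<union> {u, c, x, y} \<and>
        E' = (E - {e}) \<union> {{p, u}, {u, q}, {u, c}, {c, x}, {c, y}})"

definition nni_move :: "'a set \<Rightarrow> 'a set set \<Rightarrow> 'a \<Rightarrow> 'a \<Rightarrow> 'a set set \<Rightarrow> bool" where
  "nni_move X E v w E' \<longleftrightarrow> {v, w} \<in> E \<and> v \<notin> X \<and> w \<notin> X \<and>
     (\<exists>v1 w1. {v, v1} \<in> E \<and> v1 \<noteq> w \<and> {w, w1} \<in> E \<and> w1 \<noteq> v \<and>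
        E' = (E - {{v, v1}, {w, w1}}) \<union> {{v, w1}, {w, v1}})"

definition comp_without :: "'a set set \<Rightarrow> 'a \<Rightarrow> 'a \<Rightarrow> 'a \<Rightarrow> 'a set" where
  "comp_without E v w z = {t. (z, t) \<in> {(a, b). {a, b} \<in> E \<and> a \<notin> {v, w} \<and> b \<notin> {v, w}}\<^sup>*}"

definition other_nbrs :: "'a set set \<Rightarrow> 'a \<Rightarrow> 'a \<Rightarrow> 'a set" where
  "other_nbrs E v w = {z. ({v, z} \<in> E \<or> {w, z} \<in> E) \<and> z \<notin> {v, w}}"

definition k_problematic :: "nat \<Rightarrow> 'a set \<Rightarrow> 'a set set \<Rightarrow> 'a \<Rightarrow> 'a \<Rightarrow> bool" where
  "k_problematic k X E v w \<longleftrightarrow>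
     (\<Sum>z\<in>other_nbrs E v w. (int (card (X \<inter> comp_without E v w z)) - 1) div 2) < int k - 2"

definition prob_step :: "nat \<Rightarrow> 'a set \<Rightarrow> ('a set set \<times> 'a set set) set" where
  "prob_step k X = {(E, E'). \<exists>v w. k_problematic k X E v w \<and> nni_move X E v w E'}"

definition obtainable_by_problematic ::
  "nat \<Rightarrow> 'a set \<Rightarrow> 'a set \<Rightarrow> 'a set set \<Rightarrow> 'a set \<Rightarrow> 'a set set \<Rightarrow> bool" where
  "obtainable_by_problematic k X V E V' E' \<longleftrightarrow>
     (\<exists>E''. (E, E'') \<in> (prob_step k X)\<^sup>* \<and> iso_X X V E'' V' E')"

end

theory Submission
  imports Defs
begin

text \<open>An NNI move of S on an inner edge {v,w} is imitated in T by carrying the cherry along.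
  If the edge {p,q} subdivided by the cherry is not involved in the move, the same move is made
  in T; if it is one of the two edges that are exchanged, the cherry travels with its subtree;
  if it is {v,w} itself, one extra move on the edge {p,u} first shifts the cherry to a
  neighbouring edge. Each of these moves of T is (k+1)-problematic: around an inner edge of T
  the cherry either adds its two leaves to a single one of the four subtrees, or (for the move
  on {p,u}) forms a subtree with two leaves while the two subtrees behind q merge, and either
  change raises the sum of the terms \<lfloor>(n_i - 1)/2\<rfloor> by at most one. Finally, an isomorphism
  from the last tree of the sequence to the target tree transports the cherry to an edge of
  the target.\<close>

section \<open>Graphs, components and trees\<close>

lemma edge_rel_iff [simp]: "(a, b) \<in> edge_rel E \<longleftrightarrow> {a, b} \<in> E"
  by (simp add: edge_rel_def)

lemma edge_rel_rtrancl_sym: "(a, b) \<in> (edge_rel E)\<^sup>* \<Longrightarrow> (b, a) \<in> (edge_rel E)\<^sup>*"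
proof -
  have "(edge_rel E)\<inverse> = edge_rel E" by (auto simp: insert_commute)
  thus "(a, b) \<in> (edge_rel E)\<^sup>* \<Longrightarrow> (b, a) \<in> (edge_rel E)\<^sup>*" by (metis rtrancl_converseI)
qed

lemma edge_rel_rtrancl_mono: "E \<subseteq> F \<Longrightarrow> (edge_rel E)\<^sup>* \<subseteq> (edge_rel F)\<^sup>*"
  by (rule rtrancl_mono) (auto simp: edge_rel_def)

lemma edge_in_edge_rel_rtrancl: "{a, b} \<in> E \<Longrightarrow> (a, b) \<in> (edge_rel E)\<^sup>*"
  by auto

definition graph_on :: "'a set \<Rightarrow> 'a set set \<Rightarrow> bool" where
  "graph_on V E \<longleftrightarrow> (\<forall>e\<in>E. \<exists>a b. e = {a, b} \<and> a \<noteq> b \<and> a \<in> V \<and> b \<in> V)"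

definition cycle_free :: "'a set set \<Rightarrow> bool" where
  "cycle_free E \<longleftrightarrow> (\<forall>a b. {a, b} \<in> E \<longrightarrow> (a, b) \<notin> (edge_rel (E - {{a, b}}))\<^sup>*)"

lemma is_tree_graph_on: "is_tree V E \<Longrightarrow> graph_on V E"
  unfolding is_tree_def graph_on_def by (elim conjE)

lemma is_tree_cycle_free: "is_tree V E \<Longrightarrow> cycle_free E"
  unfolding is_tree_def cycle_free_def by (elim conjE)

lemma graph_on_edge: "graph_on V E \<Longrightarrow> {a, b} \<in> E \<Longrightarrow> a \<in> V \<and> b \<in> V \<and> a \<noteq> b"
  unfolding graph_on_def by (metis doubleton_eq_iff insertI1)

lemma graph_on_finite: "finite V \<Longrightarrow> graph_on V E \<Longrightarrow> finite E"
proof -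
  assume "finite V" "graph_on V E"
  hence "E \<subseteq> Pow V" unfolding graph_on_def by fastforce
  thus ?thesis using \<open>finite V\<close> by (simp add: finite_subset)
qed

lemma graph_on_subset:
  assumes "graph_on V E" "e \<in> E"
  shows "e \<subseteq> V"
proof -
  obtain a b where "e = {a, b}" "a \<in> V" "b \<in> V" using assms unfolding graph_on_def by blast
  thus ?thesis by simp
qed

lemma cycle_free_no_triangle:
  assumes "cycle_free E" "{a, b} \<in> E" "{b, d} \<in> E" "{a, d} \<in> E" "a \<noteq> b" "b \<noteq> d" "a \<noteq> d"
  shows False
proof -
  have "{a, b} \<in> E - {{a, d}}" "{b, d} \<in> E - {{a, d}}"
    using assms by (auto simp: doubleton_eq_iff)
  hence "(a, d) \<in> (edge_rel (E - {{a, d}}))\<^sup>*"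
    by (meson edge_in_edge_rel_rtrancl rtrancl_trans)
  thus False using assms(1,4) unfolding cycle_free_def by blast
qed

definition component :: "'a set set \<Rightarrow> 'a \<Rightarrow> 'a set" where
  "component F a = {b. (a, b) \<in> (edge_rel F)\<^sup>*}"

definition num_components :: "'a set \<Rightarrow> 'a set set \<Rightarrow> nat" where
  "num_components V F = card (component F ` V)"

lemma component_eq_iff: "component F a = component F b \<longleftrightarrow> (a, b) \<in> (edge_rel F)\<^sup>*"
proof
  assume "component F a = component F b"
  moreover have "b \<in> component F b" unfolding component_def by simp
  ultimately have "b \<in> component F a" by simp
  thus "(a, b) \<in> (edge_rel F)\<^sup>*" unfolding component_def by simp
next
  assume "(a, b) \<in> (edge_rel F)\<^sup>*"
  moreover hence "(b, a) \<in> (edge_rel F)\<^sup>*" by (rule edge_rel_rtrancl_sym)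
  ultimately show "component F a = component F b"
    unfolding component_def by (auto intro: rtrancl_trans)
qed

lemma component_no_edges: "component {} a = {a}"
  unfolding component_def edge_rel_def by simp

lemma num_components_no_edges: "num_components V {} = card V"
  unfolding num_components_def component_no_edges
  by (metis card_image inj_onI singleton_inject)

lemma rtrancl_insert_connected_edge:
  assumes "(a, b) \<in> (edge_rel F)\<^sup>*"
  shows "(edge_rel (insert {a, b} F))\<^sup>* = (edge_rel F)\<^sup>*"
proof
  have ba: "(b, a) \<in> (edge_rel F)\<^sup>*" using assms by (rule edge_rel_rtrancl_sym)
  show "(edge_rel (insert {a, b} F))\<^sup>* \<subseteq> (edge_rel F)\<^sup>*"
  proof (rule rtrancl_subset_rtrancl, clarify)
    fix s t assume "(s, t) \<in> edge_rel (insert {a, b} F)"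
    hence "(s, t) \<in> {(a, b), (b, a)} \<or> (s, t) \<in> edge_rel F" by (auto simp: doubleton_eq_iff)
    thus "(s, t) \<in> (edge_rel F)\<^sup>*" using assms ba by blast
  qed
  show "(edge_rel F)\<^sup>* \<subseteq> (edge_rel (insert {a, b} F))\<^sup>*"
    by (rule edge_rel_rtrancl_mono) auto
qed

lemma rtrancl_insert_edge_iff:
  "(s, t) \<in> (edge_rel (insert {a, b} F))\<^sup>* \<longleftrightarrow>
    (s, t) \<in> (edge_rel F)\<^sup>* \<or> ((s, a) \<in> (edge_rel F)\<^sup>* \<and> (b, t) \<in> (edge_rel F)\<^sup>*)
     \<or> ((s, b) \<in> (edge_rel F)\<^sup>* \<and> (a, t) \<in> (edge_rel F)\<^sup>*)"
  (is "?L \<longleftrightarrow> ?R")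
proof
  assume ?L thus ?R
  proof (induction rule: rtrancl_induct)
    case base thus ?case by simp
  next
    case (step t t')
    hence "{t, t'} = {a, b} \<or> (t, t') \<in> edge_rel F" by auto
    thus ?case using step(3)
      by (auto simp: doubleton_eq_iff intro: rtrancl_into_rtrancl)
  qed
next
  let ?G = "(edge_rel (insert {a, b} F))\<^sup>*"
  have sub: "(edge_rel F)\<^sup>* \<subseteq> ?G" by (rule edge_rel_rtrancl_mono) auto
  have "(a, b) \<in> ?G" by (rule edge_in_edge_rel_rtrancl) simp
  moreover hence "(b, a) \<in> ?G" by (rule edge_rel_rtrancl_sym)
  moreover assume ?R
  ultimately show ?L using sub by (meson rtrancl_trans subsetD)
qed

lemma num_components_insert_connected:
  "(a, b) \<in> (edge_rel F)\<^sup>* \<Longrightarrow> num_components V (insert {a, b} F) = num_components V F"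
  unfolding num_components_def component_def by (simp add: rtrancl_insert_connected_edge)

lemma component_insert_edge:
  assumes "(a, b) \<notin> (edge_rel F)\<^sup>*"
  shows "component (insert {a, b} F) z =
      (if (z, a) \<in> (edge_rel F)\<^sup>* \<or> (z, b) \<in> (edge_rel F)\<^sup>*
       then component F a \<union> component F b else component F z)"
proof -
  have "(z, b) \<notin> (edge_rel F)\<^sup>*" if "(z, a) \<in> (edge_rel F)\<^sup>*"
    using assms that by (meson edge_rel_rtrancl_sym rtrancl_trans)
  thus ?thesis
    unfolding component_def rtrancl_insert_edge_iff
    by (auto intro: rtrancl_trans dest: edge_rel_rtrancl_sym)
qed

lemma card_merge_two:
  assumes "finite A" "p \<in> A" "q \<in> A" "p \<noteq> q" "r \<notin> A - {p, q}"
  shows "card ((A - {p, q}) \<union> {r}) + 1 = card A"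
proof -
  have "card (A - {p, q}) = card A - 2" using assms by (simp add: card_Diff_subset)
  moreover have "card A \<ge> 2" using assms
    by (metis card_2_iff card_mono empty_subsetI insert_subset)
  ultimately show ?thesis using assms by simp
qed

lemma num_components_insert_disconnected:
  assumes "finite V" "a \<in> V" "b \<in> V" and ab: "(a, b) \<notin> (edge_rel F)\<^sup>*"
  shows "num_components V (insert {a, b} F) + 1 = num_components V F"
proof -
  let ?C = "component F"
  have img: "component (insert {a, b} F) ` V = (?C ` V - {?C a, ?C b}) \<union> {?C a \<union> ?C b}"
  proof (rule set_eqI, rule iffI)
    fix Y assume "Y \<in> component (insert {a, b} F) ` V"
    then obtain z where "z \<in> V" "Y = component (insert {a, b} F) z" by auto
    thus "Y \<in> (?C ` V - {?C a, ?C b}) \<union> {?C a \<union> ?C b}"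
      unfolding component_insert_edge[OF ab] by (auto simp: component_eq_iff)
  next
    fix Y assume Y: "Y \<in> (?C ` V - {?C a, ?C b}) \<union> {?C a \<union> ?C b}"
    show "Y \<in> component (insert {a, b} F) ` V"
    proof (cases "Y = ?C a \<union> ?C b")
      case True
      hence "component (insert {a, b} F) a = Y"
        unfolding component_insert_edge[OF ab] by simp
      thus ?thesis using assms(2) by (metis image_eqI)
    next
      case False
      then obtain z where z: "z \<in> V" "Y = ?C z" "?C z \<noteq> ?C a" "?C z \<noteq> ?C b" using Y by auto
      hence "component (insert {a, b} F) z = Y"
        unfolding component_insert_edge[OF ab] by (simp add: component_eq_iff)
      thus ?thesis using z(1) by (metis image_eqI)
    qed
  qed
  have "?C a \<noteq> ?C b" using ab component_eq_iff by metis
  moreover have "?C a \<union> ?C b \<notin> ?C ` V - {?C a, ?C b}"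
  proof
    assume "?C a \<union> ?C b \<in> ?C ` V - {?C a, ?C b}"
    then obtain z where z: "?C a \<union> ?C b = ?C z" "?C z \<noteq> ?C a" by auto
    have "(z, a) \<in> (edge_rel F)\<^sup>*" using z(1) unfolding component_def by auto
    thus False using z(2) component_eq_iff by metis
  qed
  ultimately show ?thesis unfolding num_components_def img
    using card_merge_two[of "?C ` V" "?C a" "?C b" "?C a \<union> ?C b"] assms by simp
qed

lemma card_le_num_components_plus_edges:
  assumes "finite F" "finite V" "graph_on V F"
  shows "card V \<le> num_components V F + card F"
  using assms
proof (induction F rule: finite_induct)
  case empty thus ?case by (simp add: num_components_no_edges)
next
  case (insert e F)
  then obtain a b where e: "e = {a, b}" "a \<in> V" "b \<in> V" unfolding graph_on_def by blast
  have "graph_on V F" using insert(5) unfolding graph_on_def by simp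
  hence "card V \<le> num_components V F + card F" using insert by simp
  moreover have "num_components V F \<le> num_components V (insert e F) + 1"
    using e insert(4) num_components_insert_connected num_components_insert_disconnected
    by (metis le_add1 order_refl add.commute)
  ultimately show ?case using insert(1,2) by simp
qed

lemma num_components_cycle_free:
  assumes "finite V" "graph_on V F" "cycle_free F" "G \<subseteq> F"
  shows "num_components V G + card G = card V"
proof -
  have "finite G" using graph_on_finite assms finite_subset by metis
  thus ?thesis using assms(4)
  proof (induction G rule: finite_induct)
    case empty show ?case by (simp only: num_components_no_edges card.empty add_0_right)
  next
    case (insert e G)
    hence "e \<in> F" by blast
    then obtain a b where e: "e = {a, b}" "a \<in> V" "b \<in> V" "e \<in> F"
      using assms(2) unfolding graph_on_def by blast
    have "G \<subseteq> F - {{a, b}}" using insert e by auto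
    hence "(edge_rel G)\<^sup>* \<subseteq> (edge_rel (F - {{a, b}}))\<^sup>*" by (rule edge_rel_rtrancl_mono)
    moreover have "(a, b) \<notin> (edge_rel (F - {{a, b}}))\<^sup>*"
      using assms(3) e unfolding cycle_free_def by blast
    ultimately have "(a, b) \<notin> (edge_rel G)\<^sup>*" by blast
    hence "num_components V (insert e G) + 1 = num_components V G"
      using num_components_insert_disconnected[OF assms(1) e(2,3)] e(1) by simp
    moreover have "num_components V G + card G = card V" using insert.IH insert.prems by blast
    ultimately show ?case using insert.hyps by simp
  qed
qed

lemma num_components_connected:
  assumes "connected_graph V F" "V \<noteq> {}"
  shows "num_components V F = 1"
proof -
  obtain z where z: "z \<in> V" using assms by auto
  have "component F b = component F z" if "b \<in> V" for b
    using assms(1) z that unfolding connected_graph_def component_eq_iff by blast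
  hence "component F ` V = {component F z}" using z by blast
  thus ?thesis unfolding num_components_def by simp
qed

lemma is_tree_card_edges:
  assumes "is_tree V E"
  shows "card E + 1 = card V"
proof -
  have "num_components V E + card E = card V"
    using num_components_cycle_free[of V E E] is_tree_graph_on[OF assms] is_tree_cycle_free[OF assms]
      assms unfolding is_tree_def by blast
  moreover have "num_components V E = 1"
    using num_components_connected assms unfolding is_tree_def by blast
  ultimately show ?thesis by simp
qed

lemma cycle_free_if_card_edges:
  assumes "finite V" "V \<noteq> {}" "graph_on V E" "connected_graph V E" "card E + 1 = card V"
  shows "cycle_free E"
  unfolding cycle_free_def
proof (intro allI impI notI)
  fix a b assume ab: "{a, b} \<in> E" and conn: "(a, b) \<in> (edge_rel (E - {{a, b}}))\<^sup>*"
  have fE: "finite E" using graph_on_finite assms by metis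
  have "insert {a, b} (E - {{a, b}}) = E" using ab by blast
  hence "num_components V E = num_components V (E - {{a, b}})"
    using num_components_insert_connected[OF conn, of V] by simp
  moreover have "graph_on V (E - {{a, b}})" using assms(3) unfolding graph_on_def by simp
  hence "card V \<le> num_components V (E - {{a, b}}) + card (E - {{a, b}})"
    using card_le_num_components_plus_edges[OF _ assms(1)] fE by simp
  moreover have "card (E - {{a, b}}) + 1 = card E" using card_Suc_Diff1[OF fE ab] by simp
  moreover have "num_components V E = 1" by (rule num_components_connected[OF assms(4,2)])
  ultimately show False using assms(5) by linarith
qed

section \<open>NNI moves\<close>

text \<open>Trees are characterised here by the edge count instead of acyclicity, because the
  count is evidently invariant under NNI moves; acyclicity is then recovered by
  cycle_free_if_card_edges.\<close>
definition subcubic_tree :: "'a set \<Rightarrow> 'a set set \<Rightarrow> bool" where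
  "subcubic_tree V E \<longleftrightarrow> finite V \<and> V \<noteq> {} \<and> graph_on V E \<and> connected_graph V E
     \<and> card E + 1 = card V \<and> (\<forall>z. degree E z \<le> 3)"

lemma subcubic_tree_cycle_free: "subcubic_tree V E \<Longrightarrow> cycle_free E"
  unfolding subcubic_tree_def using cycle_free_if_card_edges by metis

lemma subcubic_tree_finite_edges: "subcubic_tree V E \<Longrightarrow> finite E"
  unfolding subcubic_tree_def using graph_on_finite by metis

lemma binary_phylo_tree_subcubic:
  assumes "binary_phylo_tree X V E"
  shows "subcubic_tree V E"
proof -
  have tree: "is_tree V E" using assms unfolding binary_phylo_tree_def phylo_tree_def by simp
  have "degree E z \<le> 3" for z
  proof (cases "z \<in> V")
    case True thus ?thesis using assms unfolding binary_phylo_tree_def by simp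
  next
    case False
    hence "{e \<in> E. z \<in> e} = {}" using is_tree_graph_on[OF tree] unfolding graph_on_def by auto
    thus ?thesis unfolding degree_def by (metis card.empty le0)
  qed
  thus ?thesis using tree is_tree_graph_on[OF tree] is_tree_card_edges[OF tree]
    unfolding subcubic_tree_def is_tree_def by simp
qed

lemma nni_configuration:
  assumes "graph_on V E" "cycle_free E"
    and "{v, w} \<in> E" "{v, v1} \<in> E" "v1 \<noteq> w" "{w, w1} \<in> E" "w1 \<noteq> v"
  shows "v \<noteq> w \<and> v1 \<noteq> v \<and> w1 \<noteq> w \<and> v1 \<noteq> w1 \<and> v \<in> V \<and> w \<in> V \<and> v1 \<in> V \<and> w1 \<in> V
     \<and> {v, w1} \<notin> E \<and> {w, v1} \<notin> E"
proof -
  have basic: "v \<noteq> w" "v \<in> V" "w \<in> V" "v1 \<noteq> v" "v1 \<in> V" "w1 \<noteq> w" "w1 \<in> V"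
    using graph_on_edge[OF assms(1)] assms(3,4,6) by blast+
  have "{w, v} \<in> E" "{v1, v} \<in> E" using assms(3,4) by (simp_all add: insert_commute)
  hence "v1 \<noteq> w1" "{v, w1} \<notin> E" "{w, v1} \<notin> E"
    using cycle_free_no_triangle[OF assms(2)] assms basic by metis+
  thus ?thesis using basic by blast
qed

lemma card_degree_swap_le:
  assumes "finite E" "e1 \<in> E" "e2 \<in> E" "\<not> (z \<in> f1 \<and> z \<in> f2)"
    and "z \<in> f1 \<or> z \<in> f2 \<Longrightarrow> z \<in> e1 \<or> z \<in> e2"
  shows "degree ((E - {e1, e2}) \<union> {f1, f2}) z \<le> degree E z"
proof -
  let ?S = "{e \<in> E. z \<in> e}"
  have fin: "finite ?S" using assms(1) by simp
  show ?thesis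
  proof (cases "z \<in> f1 \<or> z \<in> f2")
    case True
    obtain e where e: "e \<in> {e1, e2}" "z \<in> e" using assms(5) True by blast
    hence eS: "e \<in> ?S" using assms(2,3) by blast
    have "{e' \<in> (E - {e1, e2}) \<union> {f1, f2}. z \<in> e'} \<subseteq> insert (if z \<in> f1 then f1 else f2) (?S - {e})"
      using assms(4) e by auto
    hence "card {e' \<in> (E - {e1, e2}) \<union> {f1, f2}. z \<in> e'} \<le> card (insert (if z \<in> f1 then f1 else f2) (?S - {e}))"
      using fin by (intro card_mono) auto
    also have "\<dots> \<le> Suc (card (?S - {e}))" using fin by (simp add: card_insert_if)
    also have "\<dots> = card ?S" using card_Suc_Diff1[OF fin eS] .
    finally show ?thesis unfolding degree_def .
  next
    case False
    hence "{e' \<in> (E - {e1, e2}) \<union> {f1, f2}. z \<in> e'} \<subseteq> ?S" by auto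
    thus ?thesis unfolding degree_def using fin by (rule card_mono[rotated])
  qed
qed

lemma nni_rtrancl_subset:
  assumes E': "E' = (E - {{v, v1}, {w, w1}}) \<union> {{v, w1}, {w, v1}}" and vw: "{v, w} \<in> E'"
  shows "(edge_rel E)\<^sup>* \<subseteq> (edge_rel E')\<^sup>*"
proof -
  have "(v, w) \<in> (edge_rel E')\<^sup>*" "(w, v1) \<in> (edge_rel E')\<^sup>*" "(v, w1) \<in> (edge_rel E')\<^sup>*"
    using vw unfolding E' by (auto intro: edge_in_edge_rel_rtrancl)
  hence moved: "(v, v1) \<in> (edge_rel E')\<^sup>*" "(w, w1) \<in> (edge_rel E')\<^sup>*"
    using edge_rel_rtrancl_sym by (meson rtrancl_trans)+
  have "(a, b) \<in> (edge_rel E')\<^sup>*" if "{a, b} \<in> E" for a b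
  proof (cases "{a, b} \<in> E'")
    case True thus ?thesis by (rule edge_in_edge_rel_rtrancl)
  next
    case False
    hence "{a, b} = {v, v1} \<or> {a, b} = {w, w1}" using that unfolding E' by blast
    thus ?thesis using moved edge_rel_rtrancl_sym by (auto simp: doubleton_eq_iff)
  qed
  thus ?thesis by (intro rtrancl_subset_rtrancl) auto
qed

lemma nni_subcubic_tree:
  assumes tree: "subcubic_tree V E" and E': "E' = (E - {{v, v1}, {w, w1}}) \<union> {{v, w1}, {w, v1}}"
    and nni: "{v, w} \<in> E" "{v, v1} \<in> E" "v1 \<noteq> w" "{w, w1} \<in> E" "w1 \<noteq> v"
  shows "subcubic_tree V E'"
proof -
  have tree_graph_on: "graph_on V E" and fin: "finite E"
    using tree subcubic_tree_finite_edges unfolding subcubic_tree_def by auto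
  note conf = nni_configuration[OF tree_graph_on subcubic_tree_cycle_free[OF tree] nni]
  have "card E' = card E"
  proof -
    have old: "{{v, v1}, {w, w1}} \<subseteq> E" "card {{v, v1}, {w, w1}} = 2"
      using conf nni by (auto simp: doubleton_eq_iff)
    hence "card (E - {{v, v1}, {w, w1}}) + 2 = card E"
      using fin card_mono[OF fin old(1)] by (simp add: card_Diff_subset)
    moreover have "card {{v, w1}, {w, v1}} = 2" using conf by (simp add: doubleton_eq_iff)
    moreover have "(E - {{v, v1}, {w, w1}}) \<inter> {{v, w1}, {w, v1}} = {}" using conf by auto
    ultimately show ?thesis unfolding E' using fin card_Un_disjoint[of "E - {{v, v1}, {w, w1}}" "{{v, w1}, {w, v1}}"]
      by (metis finite.emptyI finite.insertI finite_Diff)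
  qed
  moreover have "graph_on V E'"
    unfolding graph_on_def
  proof
    fix e assume "e \<in> E'"
    hence "e \<in> E \<or> e = {v, w1} \<or> e = {w, v1}" unfolding E' by blast
    moreover have "\<exists>a b. {v, w1} = {a, b} \<and> a \<noteq> b \<and> a \<in> V \<and> b \<in> V"
      by (intro exI[of _ v] exI[of _ w1]) (use conf nni in auto)
    moreover have "\<exists>a b. {w, v1} = {a, b} \<and> a \<noteq> b \<and> a \<in> V \<and> b \<in> V"
      by (intro exI[of _ w] exI[of _ v1]) (use conf nni in auto)
    ultimately show "\<exists>a b. e = {a, b} \<and> a \<noteq> b \<and> a \<in> V \<and> b \<in> V"
      using tree_graph_on unfolding graph_on_def by (elim disjE) simp_all
  qed
  moreover have "{v, w} \<in> E'" using nni conf unfolding E' by (auto simp: doubleton_eq_iff)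
  hence "connected_graph V E'"
    using tree nni_rtrancl_subset[OF E'] unfolding subcubic_tree_def connected_graph_def by blast
  moreover have "degree E' z \<le> 3" for z
  proof -
    have "degree E' z \<le> degree E z"
      unfolding E' by (rule card_degree_swap_le[OF fin nni(2,4)]) (use conf nni in auto)
    thus ?thesis using tree unfolding subcubic_tree_def by (meson order_trans)
  qed
  ultimately show ?thesis using tree unfolding subcubic_tree_def by simp
qed

section \<open>The subtrees around an inner edge\<close>

definition avoiding :: "'a set set \<Rightarrow> 'a \<Rightarrow> 'a \<Rightarrow> ('a \<times> 'a) set" where
  "avoiding E v w = {(a, b). {a, b} \<in> E \<and> a \<notin> {v, w} \<and> b \<notin> {v, w}}"

lemma avoiding_iff [simp]: "(a, b) \<in> avoiding E v w \<longleftrightarrow> {a, b} \<in> E \<and> a \<notin> {v, w} \<and> b \<notin> {v, w}"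
  by (simp add: avoiding_def)

lemma comp_without_eq: "comp_without E v w z = {t. (z, t) \<in> (avoiding E v w)\<^sup>*}"
  unfolding comp_without_def avoiding_def by simp

lemma avoiding_commute: "avoiding E w v = avoiding E v w"
  unfolding avoiding_def by (simp only: insert_commute[of w v "{}"])

lemma avoiding_rtrancl_sym: "(a, b) \<in> (avoiding E v w)\<^sup>* \<Longrightarrow> (b, a) \<in> (avoiding E v w)\<^sup>*"
proof -
  have "(avoiding E v w)\<inverse> = avoiding E v w" by (auto simp: insert_commute)
  thus "(a, b) \<in> (avoiding E v w)\<^sup>* \<Longrightarrow> (b, a) \<in> (avoiding E v w)\<^sup>*" by (metis rtrancl_converseI)
qed

lemma avoiding_rtrancl_avoids:
  assumes "z \<notin> {v, w}" "(z, t) \<in> (avoiding E v w)\<^sup>*"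
  shows "t \<notin> {v, w}"
  using assms(2) by (cases rule: rtranclE) (use assms(1) in simp_all)

lemma avoiding_rtrancl_in_vertices:
  assumes "graph_on V E" "z \<in> V" "(z, t) \<in> (avoiding E v w)\<^sup>*"
  shows "t \<in> V"
  using assms(3) by induction (use assms(2) graph_on_edge[OF assms(1)] in auto)

lemma comp_without_subset:
  assumes "graph_on V E" "z \<in> V"
  shows "comp_without E v w z \<subseteq> V"
  using avoiding_rtrancl_in_vertices[OF assms] unfolding comp_without_eq by blast

lemma other_nbrs_iff: "z \<in> other_nbrs E v w \<longleftrightarrow> ({v, z} \<in> E \<or> {w, z} \<in> E) \<and> z \<notin> {v, w}"
  unfolding other_nbrs_def by simp

lemma other_nbrs_commute: "other_nbrs E w v = other_nbrs E v w"
  unfolding other_nbrs_def by auto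

lemma other_nbrs_subset: "graph_on V E \<Longrightarrow> other_nbrs E v w \<subseteq> V"
  unfolding other_nbrs_def by (auto dest: graph_on_edge)

lemma avoiding_path_closes_cycle:
  assumes "cycle_free E" "{v, w} \<in> E" "v \<noteq> w" "z1 \<notin> {v, w}" "z2 \<notin> {v, w}"
    and path: "(z1, z2) \<in> (avoiding E v w)\<^sup>*" and "{v, z1} \<in> E"
    and "({v, z2} \<in> E \<and> z1 \<noteq> z2) \<or> {w, z2} \<in> E"
  shows False
proof -
  let ?G = "edge_rel (E - {{v, z1}})"
  have "avoiding E v w \<subseteq> ?G" by (auto simp: doubleton_eq_iff)
  hence "(z1, z2) \<in> ?G\<^sup>*" using path rtrancl_mono by blast
  hence reverse: "(z2, z1) \<in> ?G\<^sup>*" by (rule edge_rel_rtrancl_sym)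
  have "(v, z2) \<in> ?G\<^sup>*"
  proof (cases "{v, z2} \<in> E \<and> z1 \<noteq> z2")
    case True
    hence "{v, z2} \<in> E - {{v, z1}}" by (auto simp: doubleton_eq_iff)
    thus ?thesis by (rule edge_in_edge_rel_rtrancl)
  next
    case False
    hence "{v, w} \<in> E - {{v, z1}}" "{w, z2} \<in> E - {{v, z1}}"
      using assms by (auto simp: doubleton_eq_iff)
    thus ?thesis by (meson edge_in_edge_rel_rtrancl rtrancl_trans)
  qed
  hence "(v, z1) \<in> ?G\<^sup>*" using reverse by (rule rtrancl_trans)
  thus False using assms(1,7) unfolding cycle_free_def by blast
qed

lemma other_nbrs_not_connected:
  assumes "cycle_free E" "{v, w} \<in> E" "v \<noteq> w"
    and "z1 \<in> other_nbrs E v w" "z2 \<in> other_nbrs E v w" "z1 \<noteq> z2"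
  shows "(z1, z2) \<notin> (avoiding E v w)\<^sup>*"
proof
  assume path: "(z1, z2) \<in> (avoiding E v w)\<^sup>*"
  have ends: "z1 \<notin> {v, w}" "z2 \<notin> {v, w}" using assms(4,5) unfolding other_nbrs_iff by auto
  show False
  proof (cases "{v, z1} \<in> E")
    case True
    thus False using avoiding_path_closes_cycle[OF assms(1-3) ends path] assms(4-6)
      unfolding other_nbrs_iff by auto
  next
    case False
    have "{w, v} \<in> E" using assms(2) by (simp add: insert_commute)
    moreover have "(z1, z2) \<in> (avoiding E w v)\<^sup>*" using path avoiding_commute by metis
    ultimately show False
      using avoiding_path_closes_cycle[of E w v z1 z2] assms ends False
      unfolding other_nbrs_iff by auto
  qed
qed

definition leaf_weight :: "'a set \<Rightarrow> 'a set set \<Rightarrow> 'a \<Rightarrow> 'a \<Rightarrow> 'a \<Rightarrow> int" where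
  "leaf_weight X E v w z = (int (card (X \<inter> comp_without E v w z)) - 1) div 2"

definition nni_weight :: "'a set \<Rightarrow> 'a set set \<Rightarrow> 'a \<Rightarrow> 'a \<Rightarrow> int" where
  "nni_weight X E v w = (\<Sum>z\<in>other_nbrs E v w. leaf_weight X E v w z)"

lemma k_problematic_iff: "k_problematic k X E v w \<longleftrightarrow> nni_weight X E v w < int k - 2"
  unfolding k_problematic_def nni_weight_def leaf_weight_def ..

lemma nni_weight_commute: "nni_weight X E w v = nni_weight X E v w"
  unfolding nni_weight_def leaf_weight_def comp_without_eq avoiding_commute[of E w v]
    other_nbrs_commute[of E w v] ..

lemma pred_div2_le:
  fixes a b d :: int
  assumes "a \<le> b + 2 * d" "d \<ge> 0"
  shows "(a - 1) div 2 \<le> (b - 1) div 2 + d"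
  using assms by presburger

text \<open>Merging at most two subtrees into one raises their total weight by at most one.\<close>
lemma pred_div2_sum_le:
  fixes n :: int and m :: "'b \<Rightarrow> int"
  assumes "finite B" "card B \<le> 2" "n \<le> (\<Sum>z\<in>B. m z)" "\<forall>z\<in>B. m z \<ge> 0"
  shows "(n - 1) div 2 \<le> (\<Sum>z\<in>B. (m z - 1) div 2) + 1"
proof -
  have "card B = 0 \<or> card B = 1 \<or> card B = 2" using assms(2) by auto
  thus ?thesis
  proof (elim disjE)
    assume "card B = 0"
    thus ?thesis using assms(1,3) by simp
  next
    assume "card B = 1"
    then obtain b where "B = {b}" by (auto simp: card_Suc_eq)
    thus ?thesis using assms(3) by simp
  next
    assume "card B = 2"
    then obtain b1 b2 where "B = {b1, b2}" "b1 \<noteq> b2" by (auto simp: card_Suc_eq numeral_2_eq_2)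
    thus ?thesis using assms(3,4) by simp
  qed
qed

lemma prob_stepI:
  assumes "nni_weight X E v w < int k - 2" "{v, w} \<in> E" "v \<notin> X" "w \<notin> X"
    and "{v, v1} \<in> E" "v1 \<noteq> w" "{w, w1} \<in> E" "w1 \<noteq> v"
    and "E' = (E - {{v, v1}, {w, w1}}) \<union> {{v, w1}, {w, v1}}"
  shows "(E, E') \<in> prob_step k X"
proof -
  have "nni_move X E v w E'" unfolding nni_move_def
    using assms(2-9) by (intro conjI exI[where x = v1] exI[where x = w1]) simp_all
  moreover have "k_problematic k X E v w" unfolding k_problematic_iff by (rule assms(1))
  ultimately show ?thesis unfolding prob_step_def mem_Collect_eq case_prod_conv
    by (intro exI[of _ v] exI[of _ w] conjI)
qed

section \<open>Attaching a cherry\<close>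

definition cherry_edges :: "'a set set \<Rightarrow> 'a \<Rightarrow> 'a \<Rightarrow> 'a \<Rightarrow> 'a \<Rightarrow> 'a \<Rightarrow> 'a \<Rightarrow> 'a set set" where
  "cherry_edges E p q u c x y = (E - {{p, q}}) \<union> {{p, u}, {u, q}, {u, c}, {c, x}, {c, y}}"

lemma cherry_edges_commute: "cherry_edges E p q u c x y = cherry_edges E q p u c x y"
  unfolding cherry_edges_def by (auto simp: insert_commute)

lemma cherry_edges_cases:
  assumes "{a, b} \<in> cherry_edges E p q u c x y"
  shows "({a, b} \<in> E \<and> {a, b} \<noteq> {p, q}) \<or> {a, b} = {p, u} \<or> {a, b} = {u, q}
     \<or> {a, b} = {u, c} \<or> {a, b} = {c, x} \<or> {a, b} = {c, y}"
  using assms unfolding cherry_edges_def Un_iff Diff_iff insert_iff empty_iff by argo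

lemma replace_commute: "N \<inter> R = {} \<Longrightarrow> a \<notin> B \<Longrightarrow> (A - R \<union> B) - {a} \<union> N = ((A - {a}) \<union> N) - R \<union> B"
  by blast

lemma replace_shift:
  "f2 \<notin> E \<Longrightarrow> f1 \<noteq> f2 \<Longrightarrow> n1 \<notin> E \<Longrightarrow> n1 \<notin> M \<Longrightarrow> b \<notin> M \<Longrightarrow>
    ((E - {a, b}) \<union> {f1, f2}) - {f2} \<union> insert n2 M = ((E - {a}) \<union> insert n1 M) - {n1, b} \<union> {f1, n2}"
  by blast

lemma replace_rotate:
  "a \<in> E \<Longrightarrow> a \<noteq> b \<Longrightarrow> m \<notin> E \<Longrightarrow> n \<noteq> b \<Longrightarrow> n \<noteq> m \<Longrightarrow> b \<notin> M \<Longrightarrow> m \<notin> M \<Longrightarrow>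
    (E - {b}) \<union> insert n (insert r M) = ((E - {a}) \<union> insert n (insert m M)) - {b, m} \<union> {a, r}"
  by blast

lemma new_edges_disjoint:
  assumes "\<And>e. e \<in> N \<Longrightarrow> u \<in> e \<or> c \<in> e" "\<And>e. e \<in> R \<Longrightarrow> u \<notin> e \<and> c \<notin> e"
  shows "N \<inter> R = {}"
  using assms by (meson disjoint_iff)

lemma image_cherry_edges:
  assumes inj: "inj_on g V" and E: "\<forall>e\<in>E. e \<subseteq> V" and pq: "p \<in> V" "q \<in> V"
  shows "image g ` cherry_edges E p q u c x y
    = cherry_edges (image g ` E) (g p) (g q) (g u) (g c) (g x) (g y)"
proof -
  have "image g ` (E - {{p, q}}) = image g ` E - image g ` {{p, q}}"
    using inj_on_image_Pow[OF inj] E pq by (intro inj_on_image_set_diff) auto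
  thus ?thesis unfolding cherry_edges_def image_Un by simp
qed

lemma iso_X_of_image:
  assumes bij: "bij_betw g V W" and F: "\<forall>e\<in>F. e \<subseteq> V" and img: "image g ` F = F'"
    and fixed: "\<forall>z\<in>X. g z = z"
  shows "iso_X X V F W F'"
  unfolding iso_X_def
proof (intro exI[of _ g] conjI ballI)
  fix a b assume "a \<in> V" "b \<in> V"
  have "inj_on (image g) (Pow V)" using bij unfolding bij_betw_def by (simp add: inj_on_image_Pow)
  moreover have "{a, b} \<in> Pow V" using \<open>a \<in> V\<close> \<open>b \<in> V\<close> by simp
  moreover have "F \<subseteq> Pow V" using F by blast
  ultimately have "g ` {a, b} \<in> image g ` F \<longleftrightarrow> {a, b} \<in> F" by (rule inj_on_image_mem_iff)
  thus "{a, b} \<in> F \<longleftrightarrow> {g a, g b} \<in> F'" unfolding img by simp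
qed (use bij fixed in auto)

lemma iso_edges_image:
  assumes iso: "\<forall>a\<in>V. \<forall>b\<in>V. {a, b} \<in> E \<longleftrightarrow> {f a, f b} \<in> E'" and img: "f ` V = V'"
    and graphs: "graph_on V E" "graph_on V' E'"
  shows "image f ` E = E'"
proof (rule set_eqI, rule iffI)
  fix e' assume "e' \<in> image f ` E"
  then obtain e where e: "e \<in> E" "e' = f ` e" by blast
  then obtain a b where "e = {a, b}" "a \<in> V" "b \<in> V"
    using graphs(1) unfolding graph_on_def by blast
  thus "e' \<in> E'" using iso e by simp
next
  fix e' assume "e' \<in> E'"
  then obtain a' b' where e': "e' = {a', b'}" "a' \<in> V'" "b' \<in> V'"
    using graphs(2) unfolding graph_on_def by blast
  then obtain a b where ab: "a \<in> V" "b \<in> V" "a' = f a" "b' = f b" using img by blast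
  hence "{a, b} \<in> E" using iso e' \<open>e' \<in> E'\<close> by simp
  moreover have "e' = f ` {a, b}" using e' ab by simp
  ultimately show "e' \<in> image f ` E" by blast
qed

locale fresh_cherry =
  fixes V X :: "'a set" and u c x y :: 'a
  assumes fresh: "u \<notin> V" "c \<notin> V" "x \<notin> V" "y \<notin> V"
    and distinct: "distinct [u, c, x, y]"
    and leaves_subset: "X \<subseteq> V"

locale cherry_attachment = fresh_cherry +
  fixes E :: "'a set set" and p q :: 'a
  assumes tree: "subcubic_tree V E" and edge: "{p, q} \<in> E"
begin

abbreviation "ET \<equiv> cherry_edges E p q u c x y"
abbreviation "XT \<equiv> X \<union> {x, y}"

lemma attachment_at_edge: "{a, b} \<in> E \<Longrightarrow> cherry_attachment V X u c x y E a b"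
  by (rule cherry_attachment.intro[OF fresh_cherry_axioms], unfold_locales) (simp_all add: tree)

lemma tree_graph_on: "graph_on V E" using tree unfolding subcubic_tree_def by simp
lemma tree_cycle_free: "cycle_free E" using tree by (rule subcubic_tree_cycle_free)
lemma finite_vertices: "finite V" using tree unfolding subcubic_tree_def by simp
lemma edge_ends: "p \<in> V" "q \<in> V" "p \<noteq> q" using graph_on_edge[OF tree_graph_on edge] by auto

lemma old_edge_not_new:
  assumes "{a, b} \<in> E"
  shows "a \<notin> {u, c, x, y} \<and> b \<notin> {u, c, x, y}"
proof -
  have "a \<in> V" "b \<in> V" using graph_on_edge[OF tree_graph_on assms] by auto
  thus ?thesis using fresh by auto
qed

lemma finite_comp_without: "z \<in> V \<Longrightarrow> finite (comp_without E v w z)"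
  using comp_without_subset[OF tree_graph_on] finite_vertices by (rule finite_subset)

lemma avoiding_path_from_old_vertex:
  assumes s: "s \<in> V" "s \<notin> {v, w}" and path: "(s, t) \<in> (avoiding ET v w)\<^sup>*"
  shows "(s, t) \<in> (avoiding E v w)\<^sup>*
    \<or> (t \<in> {u, c, x, y} \<and> ((s, p) \<in> (avoiding E v w)\<^sup>* \<or> (s, q) \<in> (avoiding E v w)\<^sup>*))"
  using path
proof induction
  case base thus ?case by simp
next
  case (step t t')
  hence tt': "{t, t'} \<in> ET" "t \<notin> {v, w}" "t' \<notin> {v, w}" by auto
  show ?case using step.IH
  proof
    assume old: "(s, t) \<in> (avoiding E v w)\<^sup>*"
    hence "t \<in> V" using avoiding_rtrancl_in_vertices[OF tree_graph_on s(1)] by blast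
    thus ?case using cherry_edges_cases[OF tt'(1)] old tt' fresh distinct
      by (auto simp: doubleton_eq_iff intro: rtrancl_into_rtrancl)
  next
    assume new: "t \<in> {u, c, x, y} \<and> ((s, p) \<in> (avoiding E v w)\<^sup>* \<or> (s, q) \<in> (avoiding E v w)\<^sup>*)"
    hence "{t, t'} \<notin> E" using old_edge_not_new by blast
    hence "t' \<in> {u, c, x, y} \<or> {t, t'} = {p, u} \<or> {t, t'} = {u, q}"
      using cherry_edges_cases[OF tt'(1)] by auto
    moreover have "p \<notin> {v, w}" if "(s, p) \<in> (avoiding E v w)\<^sup>*"
      using avoiding_rtrancl_avoids[OF s(2) that] .
    moreover have "q \<notin> {v, w}" if "(s, q) \<in> (avoiding E v w)\<^sup>*"
      using avoiding_rtrancl_avoids[OF s(2) that] .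
    moreover have "(p, q) \<in> avoiding E v w" "(q, p) \<in> avoiding E v w" if "p \<notin> {v, w}" "q \<notin> {v, w}"
      using edge that by (auto simp: insert_commute)
    ultimately show ?case using new tt' fresh distinct edge_ends
      by (auto simp: doubleton_eq_iff intro: rtrancl_into_rtrancl)
  qed
qed

lemma cherry_edge_at_old_vertex:
  assumes "a \<in> V"
  shows "{a, b} \<in> ET \<longleftrightarrow> ({a, b} \<in> E \<and> {a, b} \<noteq> {p, q}) \<or> (a \<in> {p, q} \<and> b = u)"
proof -
  have "a \<notin> {u, c, x, y}" using assms fresh by auto
  thus ?thesis unfolding cherry_edges_def by (auto simp: doubleton_eq_iff)
qed

lemma cherry_edge_at_new_vertex:
  assumes "t \<in> {u, c, x, y}" "{t, t'} \<in> ET"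
  shows "t' \<in> {u, c, x, y} \<or> (t = u \<and> t' \<in> {p, q})"
proof -
  have "t \<notin> V" using assms(1) fresh by auto
  hence "p \<noteq> t" "q \<noteq> t" using edge_ends(1,2) by auto
  have "{t, t'} \<notin> E" using assms(1) old_edge_not_new by blast
  hence "{t, t'} = {p, u} \<or> {t, t'} = {u, q} \<or> {t, t'} = {u, c} \<or> {t, t'} = {c, x}
      \<or> {t, t'} = {c, y}"
    using cherry_edges_cases[OF assms(2)] by argo
  thus ?thesis
  proof (elim disjE)
    assume "{t, t'} = {p, u}" thus ?thesis using \<open>p \<noteq> t\<close> by (simp add: doubleton_eq_iff)
  next
    assume "{t, t'} = {u, q}" thus ?thesis using \<open>q \<noteq> t\<close> by (simp add: doubleton_eq_iff)
  qed (use assms(1) in \<open>auto simp: doubleton_eq_iff\<close>)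
qed

lemma avoiding_path_from_subdivision:
  assumes "(u, t) \<in> (avoiding ET v w)\<^sup>*"
  shows "t \<in> {u, c, x, y} \<or> (p \<notin> {v, w} \<and> (p, t) \<in> (avoiding E v w)\<^sup>*)
    \<or> (q \<notin> {v, w} \<and> (q, t) \<in> (avoiding E v w)\<^sup>*)"
  using assms
proof induction
  case base thus ?case by simp
next
  case (step t t')
  hence tt': "{t, t'} \<in> ET" "t \<notin> {v, w}" "t' \<notin> {v, w}" by auto
  have from_end: "?case" if r: "r \<in> {p, q}" "r \<notin> {v, w}" "(r, t) \<in> (avoiding E v w)\<^sup>*" for r
  proof -
    have "r \<in> V" using r(1) edge_ends by blast
    hence "t \<in> V" by (rule avoiding_rtrancl_in_vertices[OF tree_graph_on _ r(3)])
    hence "({t, t'} \<in> E \<and> {t, t'} \<noteq> {p, q}) \<or> (t \<in> {p, q} \<and> t' = u)"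
      using cherry_edge_at_old_vertex tt'(1) by simp
    hence "(r, t') \<in> (avoiding E v w)\<^sup>* \<or> t' = u"
      using r(3) tt' by (auto intro: rtrancl_into_rtrancl)
    thus ?case using r(1,2) by auto
  qed
  show ?case using step.IH
  proof (elim disjE conjE)
    assume "t \<in> {u, c, x, y}"
    thus ?case using cherry_edge_at_new_vertex tt' by blast
  next
    assume "p \<notin> {v, w}" "(p, t) \<in> (avoiding E v w)\<^sup>*"
    thus ?case using from_end[of p] by simp
  next
    assume "q \<notin> {v, w}" "(q, t) \<in> (avoiding E v w)\<^sup>*"
    thus ?case using from_end[of q] by simp
  qed
qed

lemma card_extra_leaves: "card {x, y} = 2"
  using distinct by simp

definition reaches_edge :: "'a \<Rightarrow> 'a \<Rightarrow> 'a \<Rightarrow> bool" where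
  "reaches_edge v w z \<longleftrightarrow> (z, p) \<in> (avoiding E v w)\<^sup>* \<or> (z, q) \<in> (avoiding E v w)\<^sup>*"

lemma card_leaves_comp_without_le:
  assumes z: "z \<in> V" "z \<notin> {v, w}"
  shows "card (XT \<inter> comp_without ET v w z)
    \<le> card (X \<inter> comp_without E v w z) + (if reaches_edge v w z then 2 else 0)"
proof -
  let ?C = "comp_without E v w z" and ?N = "if reaches_edge v w z then {x, y} else {}"
  have "XT \<inter> comp_without ET v w z \<subseteq> (X \<inter> ?C) \<union> ?N"
  proof
    fix t assume t: "t \<in> XT \<inter> comp_without ET v w z"
    hence "(z, t) \<in> (avoiding ET v w)\<^sup>*" unfolding comp_without_eq by simp
    note cases = avoiding_path_from_old_vertex[OF z this]
    show "t \<in> (X \<inter> ?C) \<union> ?N"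
    proof (cases "(z, t) \<in> (avoiding E v w)\<^sup>*")
      case True
      hence "t \<in> V" by (rule avoiding_rtrancl_in_vertices[OF tree_graph_on z(1)])
      hence "t \<in> X" using t fresh by auto
      thus ?thesis using True unfolding comp_without_eq by simp
    next
      case False
      hence "t \<in> {u, c, x, y}" "reaches_edge v w z" using cases unfolding reaches_edge_def by auto
      thus ?thesis using t fresh leaves_subset by auto
    qed
  qed
  hence "card (XT \<inter> comp_without ET v w z) \<le> card ((X \<inter> ?C) \<union> ?N)"
    using finite_comp_without[OF z(1)] by (intro card_mono) auto
  also have "\<dots> \<le> card (X \<inter> ?C) + card ?N" by (rule card_Un_le)
  also have "card ?N = (if reaches_edge v w z then 2 else 0)" using card_extra_leaves by simp
  finally show ?thesis .
qed

lemma card_leaves_comp_without_subdivision_le: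
  assumes "p \<in> {v, w}" "q \<notin> {v, w}"
  shows "card (XT \<inter> comp_without ET v w u) \<le> card (X \<inter> comp_without E v w q) + 2"
proof -
  let ?C = "comp_without E v w q"
  have "XT \<inter> comp_without ET v w u \<subseteq> (X \<inter> ?C) \<union> {x, y}"
  proof
    fix t assume t: "t \<in> XT \<inter> comp_without ET v w u"
    hence "(u, t) \<in> (avoiding ET v w)\<^sup>*" unfolding comp_without_eq by simp
    hence "t \<in> {u, c, x, y} \<or> (q, t) \<in> (avoiding E v w)\<^sup>*"
      using avoiding_path_from_subdivision assms(1) by blast
    thus "t \<in> (X \<inter> ?C) \<union> {x, y}"
      using t fresh leaves_subset unfolding comp_without_eq by auto
  qed
  hence "card (XT \<inter> comp_without ET v w u) \<le> card ((X \<inter> ?C) \<union> {x, y})"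
    using finite_comp_without[OF edge_ends(2)] by (intro card_mono) auto
  also have "\<dots> \<le> card (X \<inter> ?C) + card {x, y}" by (rule card_Un_le)
  finally show ?thesis using card_extra_leaves by simp
qed

lemma reaches_edge_unique:
  assumes vw: "{v, w} \<in> E" and z: "z1 \<in> other_nbrs E v w" "z2 \<in> other_nbrs E v w"
    and reach: "reaches_edge v w z1" "reaches_edge v w z2"
  shows "z1 = z2"
proof (rule ccontr)
  assume ne: "z1 \<noteq> z2"
  have ends: "z1 \<notin> {v, w}" "z2 \<notin> {v, w}" using z unfolding other_nbrs_iff by auto
  obtain r1 r2 where r: "r1 \<in> {p, q}" "(z1, r1) \<in> (avoiding E v w)\<^sup>*"
      "r2 \<in> {p, q}" "(z2, r2) \<in> (avoiding E v w)\<^sup>*"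
    using reach unfolding reaches_edge_def by blast
  have "r1 \<notin> {v, w}" "r2 \<notin> {v, w}"
    using avoiding_rtrancl_avoids[OF ends(1) r(2)] avoiding_rtrancl_avoids[OF ends(2) r(4)] .
  hence "(r1, r2) \<in> (avoiding E v w)\<^sup>*"
    using r(1,3) edge by (auto simp: insert_commute)
  hence "(z1, z2) \<in> (avoiding E v w)\<^sup>*"
    using r(2) avoiding_rtrancl_sym[OF r(4)] by (meson rtrancl_trans)
  moreover have "v \<noteq> w" using graph_on_edge[OF tree_graph_on vw] by blast
  ultimately show False using other_nbrs_not_connected[OF tree_cycle_free vw _ z ne] by blast
qed

lemma no_triangle: "{a, r} \<in> E \<Longrightarrow> {a, z} \<in> E \<Longrightarrow> {r, z} \<in> E \<Longrightarrow> False"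
  using cycle_free_no_triangle[OF tree_cycle_free] graph_on_edge[OF tree_graph_on] by metis

text \<open>When the inner edge {v,w} contains an end of the subdivided edge {p,q}, the
  neighbour across {p,q} is replaced by the subdivision vertex u.\<close>
definition redirect :: "'a \<Rightarrow> 'a \<Rightarrow> 'a \<Rightarrow> 'a" where
  "redirect v w z = (if p \<in> {v, w} \<and> z = q then u else if q \<in> {v, w} \<and> z = p then u else z)"

lemma not_both_edge_ends: "{v, w} \<noteq> {p, q} \<Longrightarrow> \<not> (p \<in> {v, w} \<and> q \<in> {v, w})"
  using edge_ends(3) by auto

lemma redirect_old_nbr:
  assumes vw: "{v, w} \<in> E" and a: "a \<in> {v, w}" "{a, z} \<in> E" "{a, z} \<noteq> {p, q}"
  shows "redirect v w z = z"
proof -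
  have "{a, r} \<in> E" if "r \<in> {v, w}" "a \<noteq> r" for r
  proof -
    have "{a, r} = {v, w} \<or> {a, r} = {w, v}" using a(1) that by auto
    thus ?thesis using vw by (auto simp: insert_commute)
  qed
  moreover have "a \<noteq> p" if "z = q" using a(3) that by auto
  moreover have "a \<noteq> q" if "z = p" using a(3) that by (auto simp: insert_commute)
  moreover have "{q, p} \<in> E" using edge by (simp add: insert_commute)
  ultimately show ?thesis unfolding redirect_def using no_triangle a(2) edge by metis
qed

lemma other_nbrs_cherry_edges:
  assumes vw: "{v, w} \<in> E" "{v, w} \<noteq> {p, q}"
  shows "other_nbrs ET v w = redirect v w ` other_nbrs E v w"
proof (rule set_eqI, rule iffI)
  fix z' assume "z' \<in> other_nbrs ET v w"
  then obtain a where a: "a \<in> {v, w}" "{a, z'} \<in> ET" "z' \<notin> {v, w}"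
    unfolding other_nbrs_iff by auto
  have "a \<in> V" using a(1) graph_on_edge[OF tree_graph_on vw(1)] by auto
  hence "({a, z'} \<in> E \<and> {a, z'} \<noteq> {p, q}) \<or> (a \<in> {p, q} \<and> z' = u)"
    using cherry_edge_at_old_vertex a(2) by simp
  thus "z' \<in> redirect v w ` other_nbrs E v w"
  proof
    assume old: "{a, z'} \<in> E \<and> {a, z'} \<noteq> {p, q}"
    hence "z' \<in> other_nbrs E v w" using a unfolding other_nbrs_iff by auto
    moreover have "redirect v w z' = z'" using redirect_old_nbr[OF vw(1) a(1)] old by blast
    ultimately show ?thesis by (metis image_eqI)
  next
    assume new: "a \<in> {p, q} \<and> z' = u"
    have "q \<in> other_nbrs E v w \<and> redirect v w q = u" if "a = p"
      using that a(1) not_both_edge_ends[OF vw(2)] edge unfolding other_nbrs_iff redirect_def by auto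
    moreover have "p \<in> other_nbrs E v w \<and> redirect v w p = u" if "a = q"
      using that a(1) not_both_edge_ends[OF vw(2)] edge edge_ends(3)
      unfolding other_nbrs_iff redirect_def by (auto simp: insert_commute)
    ultimately show ?thesis using new by (metis image_eqI insertE singletonD)
  qed
next
  fix z' assume "z' \<in> redirect v w ` other_nbrs E v w"
  then obtain z where z: "z \<in> other_nbrs E v w" "z' = redirect v w z" by auto
  have "u \<notin> {v, w}" using graph_on_edge[OF tree_graph_on vw(1)] fresh by auto
  moreover have "{p, u} \<in> ET" "{q, u} \<in> ET" unfolding cherry_edges_def by auto
  moreover have "z' \<in> other_nbrs ET v w" if "z' = z" "z \<noteq> q \<or> p \<notin> {v, w}" "z \<noteq> p \<or> q \<notin> {v, w}"
  proof -
    obtain a where a: "a \<in> {v, w}" "{a, z} \<in> E" "z \<notin> {v, w}"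
      using z(1) unfolding other_nbrs_iff by auto
    hence "{a, z} \<noteq> {p, q}" using that(2,3) by (auto simp: doubleton_eq_iff)
    hence "{a, z} \<in> ET" using a(2) unfolding cherry_edges_def by simp
    thus ?thesis using a that(1) unfolding other_nbrs_iff by auto
  qed
  ultimately show "z' \<in> other_nbrs ET v w"
    using z(2) unfolding redirect_def other_nbrs_iff by (auto split: if_splits)
qed

lemma inj_on_redirect:
  assumes "{v, w} \<noteq> {p, q}"
  shows "inj_on (redirect v w) (other_nbrs E v w)"
proof (rule inj_onI)
  fix z1 z2 assume z: "z1 \<in> other_nbrs E v w" "z2 \<in> other_nbrs E v w"
    and eq: "redirect v w z1 = redirect v w z2"
  have "z1 \<noteq> u" "z2 \<noteq> u" using z other_nbrs_subset[OF tree_graph_on] fresh by auto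
  thus "z1 = z2" using eq not_both_edge_ends[OF assms] unfolding redirect_def
    by (auto split: if_splits)
qed

lemma leaf_weight_redirect_le:
  assumes vw: "{v, w} \<noteq> {p, q}" and z: "z \<in> other_nbrs E v w"
  shows "leaf_weight XT ET v w (redirect v w z)
    \<le> leaf_weight X E v w z + (if reaches_edge v w z then 1 else 0)"
proof -
  have zV: "z \<in> V" "z \<notin> {v, w}"
    using subsetD[OF other_nbrs_subset[OF tree_graph_on] z] z unfolding other_nbrs_iff by auto
  have "card (XT \<inter> comp_without ET v w (redirect v w z))
    \<le> card (X \<inter> comp_without E v w z) + (if reaches_edge v w z then 2 else 0)"
  proof (cases "p \<in> {v, w} \<and> z = q")
    case True
    hence "q \<notin> {v, w}" using not_both_edge_ends[OF vw] by blast
    thus ?thesis using True card_leaves_comp_without_subdivision_le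
      unfolding redirect_def reaches_edge_def by simp
  next
    case notp: False
    show ?thesis
    proof (cases "q \<in> {v, w} \<and> z = p")
      case True
      hence "p \<notin> {v, w}" using not_both_edge_ends[OF vw] by blast
      moreover have "{q, p} \<in> E" using edge by (simp add: insert_commute)
      ultimately have "card (XT \<inter> comp_without (cherry_edges E q p u c x y) v w u)
          \<le> card (X \<inter> comp_without E v w p) + 2"
        using True cherry_attachment.card_leaves_comp_without_subdivision_le[OF attachment_at_edge]
        by blast
      moreover have "redirect v w z = u" using True notp edge_ends(3) unfolding redirect_def by auto
      ultimately show ?thesis using True
        unfolding reaches_edge_def cherry_edges_commute[of E q p] by simp
    next
      case False
      hence "redirect v w z = z" using notp unfolding redirect_def by auto
      thus ?thesis using card_leaves_comp_without_le[OF zV] by simp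
    qed
  qed
  thus ?thesis unfolding leaf_weight_def by (intro pred_div2_le) auto
qed

lemma nni_weight_cherry_edges_le:
  assumes vw: "{v, w} \<in> E" "{v, w} \<noteq> {p, q}"
  shows "nni_weight XT ET v w \<le> nni_weight X E v w + 1"
proof -
  let ?N = "other_nbrs E v w"
  have finite: "finite ?N" using other_nbrs_subset[OF tree_graph_on] finite_vertices by (rule finite_subset)
  have "card {z \<in> ?N. reaches_edge v w z} \<le> 1"
    using reaches_edge_unique[OF vw(1)] finite by (auto intro: card_le_Suc0_iff_eq[THEN iffD2])
  have "nni_weight XT ET v w = (\<Sum>z\<in>?N. leaf_weight XT ET v w (redirect v w z))"
    unfolding nni_weight_def other_nbrs_cherry_edges[OF vw] sum.reindex[OF inj_on_redirect[OF vw(2)]]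
    by simp
  also have "\<dots> \<le> (\<Sum>z\<in>?N. leaf_weight X E v w z + (if reaches_edge v w z then 1 else 0))"
    by (intro sum_mono leaf_weight_redirect_le[OF vw(2)])
  also have "\<dots> = nni_weight X E v w + int (card {z \<in> ?N. reaches_edge v w z})"
    unfolding nni_weight_def sum.distrib by (simp add: sum.inter_filter[OF finite, symmetric])
  finally show ?thesis using \<open>card {z \<in> ?N. reaches_edge v w z} \<le> 1\<close> by linarith
qed

definition p_nbrs :: "'a set" where "p_nbrs = {z. {p, z} \<in> E \<and> z \<noteq> q}"
definition q_nbrs :: "'a set" where "q_nbrs = {z. {q, z} \<in> E \<and> z \<noteq> p}"

lemma nbrs_subset: "p_nbrs \<subseteq> V" "q_nbrs \<subseteq> V"
  unfolding p_nbrs_def q_nbrs_def using graph_on_edge[OF tree_graph_on] by auto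

lemma finite_nbrs: "finite p_nbrs" "finite q_nbrs"
  using nbrs_subset finite_vertices finite_subset by blast+

lemma card_q_nbrs_le: "card q_nbrs \<le> 2"
proof -
  have "finite {e \<in> E. q \<in> e}" using subcubic_tree_finite_edges[OF tree] by simp
  moreover have "(\<lambda>z. {q, z}) ` q_nbrs \<subseteq> {e \<in> E. q \<in> e} - {{p, q}}"
    unfolding q_nbrs_def by (auto simp: doubleton_eq_iff)
  ultimately have "card ((\<lambda>z. {q, z}) ` q_nbrs) \<le> card ({e \<in> E. q \<in> e} - {{p, q}})"
    by (intro card_mono) auto
  moreover have "inj_on (\<lambda>z. {q, z}) q_nbrs" by (rule inj_onI) (auto simp: doubleton_eq_iff)
  ultimately have "card q_nbrs \<le> card ({e \<in> E. q \<in> e} - {{p, q}})" by (simp add: card_image)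
  also have "\<dots> = degree E q - 1" unfolding degree_def using edge by (simp add: card_Diff_singleton)
  also have "\<dots> \<le> 2" using tree unfolding subcubic_tree_def by (metis diff_le_mono numeral_3_eq_3 diff_Suc_1 numeral_2_eq_2)
  finally show ?thesis .
qed

lemma other_nbrs_edge: "other_nbrs E p q = p_nbrs \<union> q_nbrs"
proof (rule set_eqI)
  fix z
  have "z \<noteq> p" if "{p, z} \<in> E" using graph_on_edge[OF tree_graph_on that] by blast
  moreover have "z \<noteq> q" if "{q, z} \<in> E" using graph_on_edge[OF tree_graph_on that] by blast
  ultimately show "z \<in> other_nbrs E p q \<longleftrightarrow> z \<in> p_nbrs \<union> q_nbrs"
    unfolding other_nbrs_iff p_nbrs_def q_nbrs_def by auto
qed

lemma disjoint_nbrs: "p_nbrs \<inter> q_nbrs = {}"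
  unfolding p_nbrs_def q_nbrs_def using no_triangle edge by (auto simp: insert_commute)

lemma other_nbrs_subdivision: "other_nbrs ET p u = insert q (insert c p_nbrs)"
proof -
  have "{u, z} \<notin> E" for z using old_edge_not_new[of u z] by auto
  hence "{u, z} \<in> ET \<longleftrightarrow> z \<in> {p, q, c}" for z
    using fresh distinct edge_ends unfolding cherry_edges_def by (auto simp: doubleton_eq_iff)
  moreover have "{p, z} \<in> ET \<longleftrightarrow> ({p, z} \<in> E \<and> z \<noteq> q) \<or> z = u" for z
    using cherry_edge_at_old_vertex[OF edge_ends(1)] by (auto simp: doubleton_eq_iff)
  moreover have "p \<notin> p_nbrs" using graph_on_edge[OF tree_graph_on, of p p] unfolding p_nbrs_def by auto
  moreover have "u \<notin> p_nbrs" using nbrs_subset fresh by auto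
  ultimately show ?thesis using edge_ends fresh distinct
    unfolding set_eq_iff other_nbrs_iff by (auto simp: p_nbrs_def)
qed

lemma avoiding_path_from_center:
  assumes "(c, t) \<in> (avoiding ET p u)\<^sup>*"
  shows "t \<in> {c, x, y}"
  using assms
proof induction
  case (step t t')
  hence edge: "{t, t'} \<in> ET" "t' \<noteq> u" by auto
  have "t \<in> {u, c, x, y}" "t \<noteq> u" using step.IH distinct by auto
  hence "t' \<in> {u, c, x, y}" using cherry_edge_at_new_vertex[OF _ edge(1)] by blast
  thus ?case using edge(2) by auto
qed simp

lemma avoiding_path_from_p_nbr:
  assumes z: "z \<in> p_nbrs" and path: "(z, t) \<in> (avoiding ET p u)\<^sup>*"
  shows "(z, t) \<in> (avoiding E p q)\<^sup>*"
  using path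
proof induction
  case (step t t')
  have zV: "z \<in> V" "z \<notin> {p, q}"
    using z nbrs_subset graph_on_edge[OF tree_graph_on] unfolding p_nbrs_def by auto
  have "t \<in> V" by (rule avoiding_rtrancl_in_vertices[OF tree_graph_on zV(1) step.IH])
  moreover have "t \<notin> {p, q}" by (rule avoiding_rtrancl_avoids[OF zV(2) step.IH])
  moreover have "{t, t'} \<in> ET" "t' \<noteq> p" "t' \<noteq> u" using step.hyps(2) by auto
  ultimately have "{t, t'} \<in> E" using cherry_edge_at_old_vertex by auto
  moreover have "t' \<noteq> q"
  proof
    assume "t' = q"
    hence "{q, t} \<in> E" using \<open>{t, t'} \<in> E\<close> by (simp add: insert_commute)
    thus False using avoiding_path_closes_cycle[OF tree_cycle_free edge edge_ends(3) zV(2)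
      \<open>t \<notin> {p, q}\<close> step.IH] z unfolding p_nbrs_def by blast
  qed
  ultimately show ?case using step.IH \<open>t \<notin> {p, q}\<close> \<open>t' \<noteq> p\<close>
    by (auto intro: rtrancl_into_rtrancl)
qed simp

lemma avoiding_path_from_q:
  assumes "(q, t) \<in> (avoiding ET p u)\<^sup>*"
  shows "t = q \<or> (\<exists>z\<in>q_nbrs. (z, t) \<in> (avoiding E p q)\<^sup>*)"
  using assms
proof induction
  case (step t t')
  have "{t, t'} \<in> ET" "t \<notin> {p, u}" "t' \<notin> {p, u}" using step.hyps(2) by auto
  show ?case using step.IH
  proof
    assume "t = q"
    hence "{q, t'} \<in> E" using \<open>{t, t'} \<in> ET\<close> \<open>t' \<notin> {p, u}\<close> cherry_edge_at_old_vertex[OF edge_ends(2)]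
      by auto
    moreover hence "t' \<noteq> q" using graph_on_edge[OF tree_graph_on] by blast
    ultimately show ?case using \<open>t' \<notin> {p, u}\<close> unfolding q_nbrs_def by auto
  next
    assume "\<exists>z\<in>q_nbrs. (z, t) \<in> (avoiding E p q)\<^sup>*"
    then obtain z where z: "z \<in> q_nbrs" "(z, t) \<in> (avoiding E p q)\<^sup>*" by blast
    have zV: "z \<in> V" "z \<notin> {p, q}"
      using z(1) nbrs_subset graph_on_edge[OF tree_graph_on] unfolding q_nbrs_def by auto
    have "t \<in> V" by (rule avoiding_rtrancl_in_vertices[OF tree_graph_on zV(1) z(2)])
    moreover have "t \<notin> {p, q}" by (rule avoiding_rtrancl_avoids[OF zV(2) z(2)])
    ultimately have "{t, t'} \<in> E" using \<open>{t, t'} \<in> ET\<close> \<open>t' \<notin> {p, u}\<close> cherry_edge_at_old_vertex by auto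
    hence "t' = q \<or> (z, t') \<in> (avoiding E p q)\<^sup>*"
      using z(2) \<open>t \<notin> {p, q}\<close> \<open>t' \<notin> {p, u}\<close> by (auto intro: rtrancl_into_rtrancl)
    thus ?case using z(1) by blast
  qed
qed simp

lemma leaf_weight_p_nbr_le:
  assumes z: "z \<in> p_nbrs"
  shows "leaf_weight XT ET p u z \<le> leaf_weight X E p q z"
proof -
  have zV: "z \<in> V" using z nbrs_subset by blast
  have "XT \<inter> comp_without ET p u z \<subseteq> X \<inter> comp_without E p q z"
  proof
    fix t assume t: "t \<in> XT \<inter> comp_without ET p u z"
    hence "t \<in> comp_without E p q z"
      using avoiding_path_from_p_nbr[OF z] unfolding comp_without_eq by blast
    moreover hence "t \<in> V" using comp_without_subset[OF tree_graph_on zV] by blast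
    ultimately show "t \<in> X \<inter> comp_without E p q z" using t fresh by auto
  qed
  hence "card (XT \<inter> comp_without ET p u z) \<le> card (X \<inter> comp_without E p q z)"
    using finite_comp_without[OF zV] by (intro card_mono) auto
  thus ?thesis unfolding leaf_weight_def by (intro zdiv_mono1) auto
qed

lemma leaf_weight_center_le: "leaf_weight XT ET p u c \<le> 0"
proof -
  have "XT \<inter> comp_without ET p u c \<subseteq> {x, y}"
    using avoiding_path_from_center fresh leaves_subset unfolding comp_without_eq by auto
  hence "card (XT \<inter> comp_without ET p u c) \<le> 2"
    using card_mono[of "{x, y}"] card_extra_leaves by fastforce
  thus ?thesis unfolding leaf_weight_def by simp
qed

lemma leaf_weight_q_le:
  assumes "q \<notin> X"
  shows "leaf_weight XT ET p u q \<le> (\<Sum>z\<in>q_nbrs. leaf_weight X E p q z) + 1"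
proof -
  have "XT \<inter> comp_without ET p u q \<subseteq> (\<Union>z\<in>q_nbrs. X \<inter> comp_without E p q z)"
  proof
    fix t assume t: "t \<in> XT \<inter> comp_without ET p u q"
    have "t \<noteq> q" using t assms fresh edge_ends by auto
    then obtain z where z: "z \<in> q_nbrs" "(z, t) \<in> (avoiding E p q)\<^sup>*"
      using avoiding_path_from_q t unfolding comp_without_eq by blast
    have "t \<in> V" using avoiding_rtrancl_in_vertices[OF tree_graph_on _ z(2)] z(1) nbrs_subset by blast
    thus "t \<in> (\<Union>z\<in>q_nbrs. X \<inter> comp_without E p q z)"
      using t z fresh unfolding comp_without_eq by auto
  qed
  moreover have "finite (\<Union>z\<in>q_nbrs. X \<inter> comp_without E p q z)"
  proof (rule finite_UN_I[OF finite_nbrs(2)])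
    fix z assume "z \<in> q_nbrs"
    hence "z \<in> V" using nbrs_subset by blast
    thus "finite (X \<inter> comp_without E p q z)" using finite_comp_without by blast
  qed
  ultimately have "card (XT \<inter> comp_without ET p u q) \<le> card (\<Union>z\<in>q_nbrs. X \<inter> comp_without E p q z)"
    by (rule card_mono[rotated])
  also have "\<dots> \<le> (\<Sum>z\<in>q_nbrs. card (X \<inter> comp_without E p q z))"
    by (rule card_UN_le[OF finite_nbrs(2)])
  finally have "int (card (XT \<inter> comp_without ET p u q))
      \<le> (\<Sum>z\<in>q_nbrs. int (card (X \<inter> comp_without E p q z)))"
    by (simp flip: of_nat_sum)
  thus ?thesis unfolding leaf_weight_def
    by (intro pred_div2_sum_le[OF finite_nbrs(2) card_q_nbrs_le]) auto
qed

lemma nni_weight_subdivision_edge_le: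
  assumes "q \<notin> X"
  shows "nni_weight XT ET p u \<le> nni_weight X E p q + 1"
proof -
  have "q \<notin> p_nbrs" unfolding p_nbrs_def by simp
  moreover have "c \<notin> p_nbrs" "q \<noteq> c" using nbrs_subset fresh edge_ends by auto
  ultimately have "nni_weight XT ET p u
      = (\<Sum>z\<in>p_nbrs. leaf_weight XT ET p u z) + leaf_weight XT ET p u q + leaf_weight XT ET p u c"
    unfolding nni_weight_def other_nbrs_subdivision using finite_nbrs(1) by simp
  also have "\<dots> \<le> (\<Sum>z\<in>p_nbrs. leaf_weight X E p q z) + ((\<Sum>z\<in>q_nbrs. leaf_weight X E p q z) + 1)"
    using sum_mono[of p_nbrs "leaf_weight XT ET p u" "leaf_weight X E p q", OF leaf_weight_p_nbr_le]
      leaf_weight_q_le[OF assms] leaf_weight_center_le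
    by linarith
  also have "\<dots> = nni_weight X E p q + 1"
    unfolding nni_weight_def other_nbrs_edge using finite_nbrs disjoint_nbrs by (simp add: sum.union_disjoint)
  finally show ?thesis .
qed

lemma old_vertex_not_leaf: "z \<in> V \<Longrightarrow> z \<notin> X \<Longrightarrow> z \<notin> XT"
  using fresh by auto

section \<open>Carrying the cherry along NNI moves\<close>

lemma cherry_step_disjoint:
  assumes nni: "{v, w} \<in> E" "{v, v1} \<in> E" "v1 \<noteq> w" "{w, w1} \<in> E" "w1 \<noteq> v"
    and inner: "v \<notin> X" "w \<notin> X" and weight: "nni_weight X E v w < int k - 2"
    and E': "E' = (E - {{v, v1}, {w, w1}}) \<union> {{v, w1}, {w, v1}}"
    and other: "{p, q} \<noteq> {v, w}" "{p, q} \<noteq> {v, v1}" "{p, q} \<noteq> {w, w1}"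
  shows "(ET, cherry_edges E' p q u c x y) \<in> prob_step (k + 1) XT" "{p, q} \<in> E'"
proof -
  note conf = nni_configuration[OF tree_graph_on tree_cycle_free nni]
  have "nni_weight XT ET v w < int (k + 1) - 2"
    using nni_weight_cherry_edges_le[OF nni(1) other(1)[symmetric]] weight by linarith
  moreover have "{v, w} \<in> ET" "{v, v1} \<in> ET" "{w, w1} \<in> ET"
    using nni other unfolding cherry_edges_def by auto
  moreover have "v \<notin> XT" "w \<notin> XT" using old_vertex_not_leaf conf inner by auto
  moreover have "cherry_edges E' p q u c x y = (ET - {{v, v1}, {w, w1}}) \<union> {{v, w1}, {w, v1}}"
  proof -
    have "v \<in> V" "v1 \<in> V" "w \<in> V" "w1 \<in> V" using conf by auto
    hence old: "u \<notin> e \<and> c \<notin> e" if "e \<in> {{v, v1}, {w, w1}}" for e using that fresh by auto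
    have new: "u \<in> e \<or> c \<in> e" if "e \<in> {{p, u}, {u, q}, {u, c}, {c, x}, {c, y}}" for e
      using that by auto
    have "{{p, u}, {u, q}, {u, c}, {c, x}, {c, y}} \<inter> {{v, v1}, {w, w1}} = {}"
      by (rule new_edges_disjoint[OF new old])
    moreover have "{p, q} \<notin> {{v, w1}, {w, v1}}"
    proof
      assume "{p, q} \<in> {{v, w1}, {w, v1}}"
      hence "{p, q} = {v, w1} \<or> {p, q} = {w, v1}" by simp
      thus False using edge conf by metis
    qed
    ultimately show ?thesis unfolding cherry_edges_def E' by (rule replace_commute)
  qed
  ultimately show "(ET, cherry_edges E' p q u c x y) \<in> prob_step (k + 1) XT"
    using nni(3,5) by (intro prob_stepI) auto
  show "{p, q} \<in> E'" unfolding E' using edge other by auto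
qed

lemma cherry_step_adjacent:
  assumes nni: "{p, w} \<in> E" "q \<noteq> w" "{w, w1} \<in> E" "w1 \<noteq> p"
    and inner: "p \<notin> X" "w \<notin> X" and weight: "nni_weight X E p w < int k - 2"
    and E': "E' = (E - {{p, q}, {w, w1}}) \<union> {{p, w1}, {w, q}}"
  shows "(ET, cherry_edges E' w q u c x y) \<in> prob_step (k + 1) XT" "{w, q} \<in> E'"
proof -
  note conf = nni_configuration[OF tree_graph_on tree_cycle_free nni(1) edge nni(2-4)]
  have other: "{p, w} \<noteq> {p, q}" using nni(2) by (auto simp: doubleton_eq_iff)
  have "nni_weight XT ET p w < int (k + 1) - 2"
    using nni_weight_cherry_edges_le[OF nni(1) other] weight by linarith
  moreover have "{p, w} \<in> ET" "{p, u} \<in> ET" "{w, w1} \<in> ET"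
    using nni(1,3) other conf unfolding cherry_edges_def by (auto simp: doubleton_eq_iff)
  moreover have "p \<notin> XT" "w \<notin> XT" using old_vertex_not_leaf conf inner by auto
  moreover have "u \<noteq> w" using conf fresh by auto
  moreover have "cherry_edges E' w q u c x y = (ET - {{p, u}, {w, w1}}) \<union> {{p, w1}, {w, u}}"
  proof -
    have "{p, u} \<notin> E" using old_edge_not_new by blast
    moreover have "{p, w1} \<noteq> {w, q}" using conf by (simp add: doubleton_eq_iff)
    moreover have "{p, u} \<notin> {{u, q}, {u, c}, {c, x}, {c, y}}"
      using fresh edge_ends by (auto simp: doubleton_eq_iff)
    moreover have "{w, w1} \<notin> {{u, q}, {u, c}, {c, x}, {c, y}}"
      using fresh conf by (auto simp: doubleton_eq_iff)
    ultimately show ?thesis unfolding cherry_edges_def E' using conf by (intro replace_shift) simp_all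
  qed
  ultimately show "(ET, cherry_edges E' w q u c x y) \<in> prob_step (k + 1) XT"
    using nni(4) by (intro prob_stepI) auto
  show "{w, q} \<in> E'" unfolding E' by simp
qed

lemma cherry_step_across:
  assumes nbr: "{p, v1} \<in> E" "v1 \<noteq> q" and inner: "p \<notin> X" "q \<notin> X"
    and weight: "nni_weight X E p q < int k - 2"
  shows "(ET, cherry_edges E p v1 u c x y) \<in> prob_step (k + 1) XT"
proof -
  have v1: "v1 \<in> V" "p \<noteq> v1" using graph_on_edge[OF tree_graph_on nbr(1)] by auto
  have other: "{p, v1} \<noteq> {p, q}" using nbr(2) by (auto simp: doubleton_eq_iff)
  have "nni_weight XT ET p u < int (k + 1) - 2"
    using nni_weight_subdivision_edge_le[OF inner(2)] weight by linarith
  moreover have "{p, u} \<in> ET" "{p, v1} \<in> ET" "{u, q} \<in> ET"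
    using nbr(1) other unfolding cherry_edges_def by auto
  moreover have "p \<notin> XT" "u \<notin> XT" using old_vertex_not_leaf edge_ends inner fresh distinct leaves_subset by auto
  moreover have "v1 \<noteq> u" "q \<noteq> p" using v1 fresh edge_ends by auto
  moreover have "cherry_edges E p v1 u c x y = (ET - {{p, v1}, {u, q}}) \<union> {{p, q}, {u, v1}}"
  proof -
    have "{u, q} \<notin> E" using old_edge_not_new by blast
    moreover have "{p, u} \<noteq> {p, v1}" "{p, u} \<noteq> {u, q}"
      using v1 fresh edge_ends by (auto simp: doubleton_eq_iff)
    moreover have "{p, v1} \<notin> {{u, c}, {c, x}, {c, y}}" "{u, q} \<notin> {{u, c}, {c, x}, {c, y}}"
      using v1 fresh edge_ends distinct by (auto simp: doubleton_eq_iff)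
    ultimately show ?thesis unfolding cherry_edges_def
      by (intro replace_rotate[OF edge other[symmetric]]) simp_all
  qed
  ultimately show ?thesis by (intro prob_stepI) auto
qed

lemma cherry_follows_nni:
  assumes nni: "{v, w} \<in> E" "{v, v1} \<in> E" "v1 \<noteq> w" "{w, w1} \<in> E" "w1 \<noteq> v"
    and inner: "v \<notin> X" "w \<notin> X" and weight: "nni_weight X E v w < int k - 2"
    and E': "E' = (E - {{v, v1}, {w, w1}}) \<union> {{v, w1}, {w, v1}}"
  shows "\<exists>p' q'. {p', q'} \<in> E' \<and> (ET, cherry_edges E' p' q' u c x y) \<in> (prob_step (k + 1) XT)\<^sup>*"
proof -
  have same: "ET = cherry_edges E a b u c x y" if "{p, q} = {a, b}" for a b
    using that cherry_edges_commute[of E p q] by (auto simp: doubleton_eq_iff)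
  interpret at_v: cherry_attachment V X u c x y E v v1 by (rule attachment_at_edge[OF nni(2)])
  have move_v: "(cherry_edges E v v1 u c x y, cherry_edges E' w v1 u c x y) \<in> prob_step (k + 1) XT"
    "{w, v1} \<in> E'"
    using at_v.cherry_step_adjacent[OF nni(1,3,4,5) inner weight E'] by auto
  consider "{p, q} = {v, w}" | "{p, q} = {v, v1}" | "{p, q} = {w, w1}"
    | "{p, q} \<noteq> {v, w}" "{p, q} \<noteq> {v, v1}" "{p, q} \<noteq> {w, w1}" by blast
  thus ?thesis
  proof cases
    case 1
    interpret at_vw: cherry_attachment V X u c x y E v w by (rule attachment_at_edge[OF nni(1)])
    have "(ET, cherry_edges E v v1 u c x y) \<in> prob_step (k + 1) XT"
      unfolding same[OF 1] by (rule at_vw.cherry_step_across[OF nni(2,3) inner weight])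
    thus ?thesis using move_v by (meson converse_rtrancl_into_rtrancl r_into_rtrancl)
  next
    case 2
    thus ?thesis using move_v same by (metis r_into_rtrancl)
  next
    case 3
    interpret at_w: cherry_attachment V X u c x y E w w1 by (rule attachment_at_edge[OF nni(4)])
    have wv: "{w, v} \<in> E" using nni(1) by (simp add: insert_commute)
    have weight': "nni_weight X E w v < int k - 2" using weight nni_weight_commute by metis
    have E'': "E' = (E - {{w, w1}, {v, v1}}) \<union> {{w, v1}, {v, w1}}" unfolding E' by auto
    have "(cherry_edges E w w1 u c x y, cherry_edges E' v w1 u c x y) \<in> prob_step (k + 1) XT"
      "{v, w1} \<in> E'"
      using at_w.cherry_step_adjacent[OF wv nni(5,2,3) inner(2,1) weight' E''] by auto
    thus ?thesis using same[OF 3] by (metis r_into_rtrancl)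
  next
    case 4
    thus ?thesis using cherry_step_disjoint[OF nni inner weight E'] by (metis r_into_rtrancl)
  qed
qed

end

lemma (in fresh_cherry) cherry_follows_problematic_moves:
  assumes steps: "(E1, E2) \<in> (prob_step k X)\<^sup>*" and tree: "subcubic_tree V E1" and edge: "{p, q} \<in> E1"
  shows "subcubic_tree V E2 \<and> (\<exists>p' q'. {p', q'} \<in> E2 \<and>
    (cherry_edges E1 p q u c x y, cherry_edges E2 p' q' u c x y) \<in> (prob_step (k + 1) (X \<union> {x, y}))\<^sup>*)"
  using steps
proof induction
  case base thus ?case using tree edge by blast
next
  case (step E2 E3)
  obtain p' q' where IH: "subcubic_tree V E2" "{p', q'} \<in> E2"
    "(cherry_edges E1 p q u c x y, cherry_edges E2 p' q' u c x y) \<in> (prob_step (k + 1) (X \<union> {x, y}))\<^sup>*"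
    using step.IH by blast
  obtain v w v1 w1 where weight: "nni_weight X E2 v w < int k - 2"
    and nni: "{v, w} \<in> E2" "{v, v1} \<in> E2" "v1 \<noteq> w" "{w, w1} \<in> E2" "w1 \<noteq> v"
    and inner: "v \<notin> X" "w \<notin> X" and E3: "E3 = (E2 - {{v, v1}, {w, w1}}) \<union> {{v, w1}, {w, v1}}"
    using step.hyps(2) unfolding prob_step_def nni_move_def k_problematic_iff by blast
  interpret cherry_attachment V X u c x y E2 p' q'
    by (rule cherry_attachment.intro[OF fresh_cherry_axioms]) (unfold_locales; fact IH)
  obtain p'' q'' where "{p'', q''} \<in> E3"
    "(cherry_edges E2 p' q' u c x y, cherry_edges E3 p'' q'' u c x y) \<in> (prob_step (k + 1) (X \<union> {x, y}))\<^sup>*"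
    using cherry_follows_nni[OF nni inner weight E3] by blast
  moreover have "subcubic_tree V E3" by (rule nni_subcubic_tree[OF IH(1) E3 nni])
  ultimately show ?case using IH(3) by (meson rtrancl_trans)
qed

lemma (in fresh_cherry) attach_cherry_iso:
  assumes inf: "infinite (UNIV :: 'a set)"
    and iso: "iso_X X V E V' E'" and graphs: "graph_on V E" "graph_on V' E'" and fin: "finite V'"
    and edge: "{p, q} \<in> E" and new: "x \<notin> V'" "y \<notin> V'"
  shows "\<exists>e'\<in>E'. \<exists>u' c' W F. attach_cherry V' E' e' x y u' c' W F \<and>
    iso_X (X \<union> {x, y}) (V \<union> {u, c, x, y}) (cherry_edges E p q u c x y) W F"
proof -
  obtain f where f: "bij_betw f V V'" "\<forall>a\<in>V. \<forall>b\<in>V. {a, b} \<in> E \<longleftrightarrow> {f a, f b} \<in> E'"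
    "\<forall>z\<in>X. f z = z"
    using iso unfolding iso_X_def by blast
  obtain u' where u': "u' \<notin> V' \<union> {x, y}" using ex_new_if_finite[OF inf] fin by (meson finite.simps finite_Un)
  obtain c' where c': "c' \<notin> V' \<union> {x, y, u'}" using ex_new_if_finite[OF inf] fin by (meson finite.simps finite_Un)
  define g where "g = f(u := u', c := c', x := x, y := y)"
  have g_new: "g u = u'" "g c = c'" "g x = x" "g y = y" using distinct unfolding g_def by auto
  have g_old: "g z = f z" if "z \<in> V" for z using that fresh unfolding g_def by auto
  have edges_old: "\<forall>e\<in>E. e \<subseteq> V" using graph_on_subset[OF graphs(1)] by blast
  have pq: "p \<in> V" "q \<in> V" using graph_on_edge[OF graphs(1) edge] by auto
  hence pq': "{f p, f q} \<in> E'" using f(2) edge by blast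
  have bij_old: "bij_betw g V V'" using f(1) g_old bij_betw_cong by blast
  moreover have "bij_betw g {u, c, x, y} {u', c', x, y}"
    unfolding bij_betw_def using g_new distinct u' c' by auto
  ultimately have bij: "bij_betw g (V \<union> {u, c, x, y}) (V' \<union> {u', c', x, y})"
    using u' c' new by (intro bij_betw_combine) auto
  have "\<forall>a\<in>V. \<forall>b\<in>V. {a, b} \<in> E \<longleftrightarrow> {g a, g b} \<in> E'" using f(2) g_old by simp
  hence image_edges: "image g ` E = E'"
    by (rule iso_edges_image[OF _ bij_betw_imp_surj_on[OF bij_old] graphs])
  have "inj_on g V" using bij_betw_imp_inj_on[OF bij] by (rule inj_on_subset) blast
  hence "image g ` cherry_edges E p q u c x y = cherry_edges (image g ` E) (g p) (g q) (g u) (g c) (g x) (g y)"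
    by (rule image_cherry_edges[OF _ edges_old pq])
  hence "image g ` cherry_edges E p q u c x y = cherry_edges E' (f p) (f q) u' c' x y"
    unfolding image_edges g_new g_old[OF pq(1)] g_old[OF pq(2)] .
  moreover have "\<forall>e\<in>cherry_edges E p q u c x y. e \<subseteq> V \<union> {u, c, x, y}"
    using edges_old pq unfolding cherry_edges_def by auto
  moreover have "\<forall>z\<in>X \<union> {x, y}. g z = z" using g_old g_new f(3) leaves_subset by auto
  ultimately have "iso_X (X \<union> {x, y}) (V \<union> {u, c, x, y}) (cherry_edges E p q u c x y)
      (V' \<union> {u', c', x, y}) (cherry_edges E' (f p) (f q) u' c' x y)"
    using bij by (intro iso_X_of_image) auto
  moreover have "attach_cherry V' E' {f p, f q} x y u' c' (V' \<union> {u', c', x, y})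
      (cherry_edges E' (f p) (f q) u' c' x y)"
    unfolding attach_cherry_def cherry_edges_def using pq' u' c' new distinct by auto
  ultimately show ?thesis using pq' by blast
qed

theorem lemma5:
  fixes X :: "'a set" and V1 V2 :: "'a set" and E1 E2 :: "'a set set"
    and k a :: nat and x y u c :: 'a and VT :: "'a set" and ET :: "'a set set"
  assumes "infinite (UNIV :: 'a set)"
    and "k \<ge> 2" and "a \<le> 2"
    and "binary_phylo_tree X V1 E1" and "binary_phylo_tree X V2 E2"
    and "card X = 2 * k + a"
    and "x \<noteq> y" and "x \<notin> X" and "y \<notin> X"
    and "x \<notin> V2" and "y \<notin> V2"
    and "obtainable_by_problematic k X V1 E1 V2 E2"
    and "e1 \<in> E1"
    and "attach_cherry V1 E1 e1 x y u c VT ET"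
  shows "\<exists>e2\<in>E2. \<exists>u' c' VT' ET'. attach_cherry V2 E2 e2 x y u' c' VT' ET' \<and>
           obtainable_by_problematic (k + 1) (X \<union> {x, y}) VT ET VT' ET'"
proof -
  obtain p q where e1: "e1 = {p, q}" and T: "VT = V1 \<union> {u, c, x, y}" "ET = cherry_edges E1 p q u c x y"
    and fresh: "u \<notin> V1" "c \<notin> V1" "x \<notin> V1" "y \<notin> V1" "distinct [u, c, x, y]"
    using assms(14) unfolding attach_cherry_def cherry_edges_def by blast
  have S1: "subcubic_tree V1 E1" and S2: "subcubic_tree V2 E2"
    using binary_phylo_tree_subcubic assms(4,5) by blast+
  interpret fresh_cherry V1 X u c x y
    using fresh assms(4) by unfold_locales (auto simp: binary_phylo_tree_def phylo_tree_def)
  obtain E'' where steps: "(E1, E'') \<in> (prob_step k X)\<^sup>*" and iso: "iso_X X V1 E'' V2 E2"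
    using assms(12) unfolding obtainable_by_problematic_def by blast
  obtain p' q' where S'': "subcubic_tree V1 E''" and edge: "{p', q'} \<in> E''" and moves:
      "(ET, cherry_edges E'' p' q' u c x y) \<in> (prob_step (k + 1) (X \<union> {x, y}))\<^sup>*"
    using cherry_follows_problematic_moves[OF steps S1] assms(13) T(2) e1 by blast
  obtain e2 u' c' W F where "e2 \<in> E2" "attach_cherry V2 E2 e2 x y u' c' W F"
      "iso_X (X \<union> {x, y}) VT (cherry_edges E'' p' q' u c x y) W F"
    using attach_cherry_iso[OF assms(1) iso _ _ _ edge assms(10,11)] S'' S2 T(1)
    unfolding subcubic_tree_def by blast
  thus ?thesis using moves unfolding obtainable_by_problematic_def by blast
qed

end
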